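(* Let $\sigma\ge\tilde\sigma\ge1/4$ and let $\Lambda$ be a finite subset of $\mathbb{Z}^\nu$. Suppose $T(m,n)=D(m,n)+R(m,n)$ for $m,n\in\Lambda$, where $D$ is a diagonal matrix. Suppose further that for each $n\in\Lambda$ there exist numbers $l_n>0$, $0\le\mu_n\le\sigma-\tilde\sigma$, $C_n>0$ and a set $U(n)\subset\Lambda$ with $n\in U(n)$ such that: $T_{U(n)}^{-1}$ exists and $\|T_{U(n)}^{-1}\|_{\tilde\sigma+\mu_n,c}\le C_n$; $\mathrm{dist}(n,\Lambda\setminus U(n))\ge l_n$; and $C_ne^{-\mu_nl_n^c}\|R\|_{\sigma,c}\le\frac12$. Then $T_\Lambda$ is invertible and $\|T_\Lambda^{-1}\|_{\tilde\sigma,c}\le(1+w_{\tilde\sigma,c}(0))C$, where $C:=\sup_{n\in\Lambda}C_n$.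
   Context: $c=0.01$, $|\cdot|$ the maximum norm on $\mathbb{Z}^\nu$ (distances taken in it). $D_N:=\max(D_{\nu,c},D_{\nu,1})$ where $D_{\nu,c}=\sup_{n\in\mathbb{Z}^\nu,\sigma\ge1/4}\sum_m\frac{e^{\sigma|n|^c}}{e^{\sigma|m|^c}e^{\sigma|n-m|^c}}$ and $D_{\nu,1}=\sup_{n,\sigma\ge1/4}\sum_m\frac{(1+|n|)^{\nu+1}e^{\sigma|n|}}{(1+|m|)^{\nu+1}e^{\sigma|m|}(1+|n-m|)^{\nu+1}e^{\sigma|n-m|}}$; $w_{\sigma,c}(n)=D_Ne^{\sigma|n|^c}$. For a matrix $A$ indexed by a subset of $\mathbb{Z}^\nu$ (extended by zero), $\|A\|_{\sigma,c}:=\sup_n\sum_mw_{\sigma,c}(m-n)|A(m,n)|$. For $S\subset\Lambda$, $T_S$ denotes the restriction $(T(m,n))_{m,n\in S}$, and $T_S^{-1}$ its inverse as a matrix on $S$. *)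

theory Defs
  imports "HOL-Analysis.Analysis"
begin

text \<open>Lattice points of Z^nu are modelled as int ^ 'n, with nu = CARD('n).
  Matrices are complex-valued functions of two lattice points.\<close>

definition cexp :: real where "cexp = 0.01"

definition maxnorm :: "int ^ ('n::finite) \<Rightarrow> real" where
  "maxnorm x = Max (range (\<lambda>i. real_of_int \<bar>x $ i\<bar>))"

definition D_nu_c :: "('n::finite) itself \<Rightarrow> real" where
  "D_nu_c _ = Sup {infsum (\<lambda>m::int ^ 'n. exp (\<sigma> * maxnorm n powr cexp) /
        (exp (\<sigma> * maxnorm m powr cexp) * exp (\<sigma> * maxnorm (n - m) powr cexp))) UNIV
      | n \<sigma>. \<sigma> \<ge> 1/4}"

definition D_nu_1 :: "('n::finite) itself \<Rightarrow> real" where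
  "D_nu_1 _ = Sup {infsum (\<lambda>m::int ^ 'n.
        ((1 + maxnorm n) ^ (CARD('n) + 1) * exp (\<sigma> * maxnorm n)) /
        (((1 + maxnorm m) ^ (CARD('n) + 1) * exp (\<sigma> * maxnorm m)) *
         ((1 + maxnorm (n - m)) ^ (CARD('n) + 1) * exp (\<sigma> * maxnorm (n - m))))) UNIV
      | n \<sigma>. \<sigma> \<ge> 1/4}"

definition D_N :: "('n::finite) itself \<Rightarrow> real" where
  "D_N t = max (D_nu_c t) (D_nu_1 t)"

definition wt :: "real \<Rightarrow> int ^ ('n::finite) \<Rightarrow> real" where
  "wt \<sigma> n = D_N TYPE('n) * exp (\<sigma> * maxnorm n powr cexp)"

definition mnorm :: "real \<Rightarrow> (int ^ ('n::finite)) set \<Rightarrow> (int ^ 'n \<Rightarrow> int ^ 'n \<Rightarrow> complex) \<Rightarrow> real" where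
  "mnorm \<sigma> S A = (if S = {} then 0 else
      Max ((\<lambda>n. \<Sum>m\<in>S. wt \<sigma> (m - n) * cmod (A m n)) ` S))"

definition is_inv_on :: "(int ^ ('n::finite)) set \<Rightarrow> (int ^ 'n \<Rightarrow> int ^ 'n \<Rightarrow> complex)
    \<Rightarrow> (int ^ 'n \<Rightarrow> int ^ 'n \<Rightarrow> complex) \<Rightarrow> bool" where
  "is_inv_on S A B \<longleftrightarrow>
     (\<forall>m\<in>S. \<forall>k\<in>S. (\<Sum>j\<in>S. A m j * B j k) = (if m = k then 1 else 0)) \<and>
     (\<forall>m\<in>S. \<forall>k\<in>S. (\<Sum>j\<in>S. B m j * A j k) = (if m = k then 1 else 0))"

end

(*
  Let A be the matrix whose n-th column is the n-th column of the local inverse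
  T_U(n)^-1, extended by zero. Then T A = I + K, where the n-th column of K vanishes on U(n)
  and equals (R T_U(n)^-1)(m, n) for m outside U(n). Such m lie at distance at least l_n
  from n, so passing from the weight w_sigma' to w_(sigma' + mu_n) gains the factor
  exp (- mu_n l_n^c); together with the submultiplicativity
  w_(sigma' + mu)(m - n) <= w_sigma(m - j) w_(sigma' + mu)(j - n) this bounds the n-th column
  of K by C_n exp (- mu_n l_n^c) |R|_sigma <= 1/2. Hence I + K has an inverse of norm at most
  1 + w_sigma'(0), and T^-1 = A (I + K)^-1.

  Submultiplicativity follows from the subadditivity of t |-> t^c and from D_N >= 1. The
  latter needs the supremum defining D_nu_c to be finite, which follows from
  (a + b)^c <= a^c + b^c - (1 - c) min(a, b)^c and the summability of exp (- k |m|^c) over Z^nu.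
*)

theory Submission
  imports Defs "HOL-Real_Asymp.Real_Asymp" "Jordan_Normal_Form.Determinant"
begin

section \<open>The max norm and concavity of \<open>t powr c\<close>\<close>

lemma cexp_pos: "0 < cexp" and cexp_le_1: "cexp \<le> 1"
  by (simp_all add: cexp_def)

lemma abs_component_le_maxnorm: "real_of_int \<bar>x $ i\<bar> \<le> maxnorm x"
  unfolding maxnorm_def by (rule Max_ge) auto

lemma maxnorm_le: "(\<And>i. real_of_int \<bar>x $ i\<bar> \<le> B) \<Longrightarrow> maxnorm x \<le> B"
  unfolding maxnorm_def by (subst Max_le_iff) auto

lemma maxnorm_nonneg: "0 \<le> maxnorm x"
  by (rule order_trans[OF _ abs_component_le_maxnorm]) simp

lemma maxnorm_zero [simp]: "maxnorm 0 = 0"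
  by (rule antisym[OF maxnorm_le maxnorm_nonneg]) simp

lemma maxnorm_triangle: "maxnorm (x + y) \<le> maxnorm x + maxnorm y"
proof (rule maxnorm_le)
  fix i
  have "real_of_int \<bar>(x + y) $ i\<bar> \<le> real_of_int \<bar>x $ i\<bar> + real_of_int \<bar>y $ i\<bar>"
    by simp
  also have "\<dots> \<le> maxnorm x + maxnorm y"
    by (intro add_mono abs_component_le_maxnorm)
  finally show "real_of_int \<bar>(x + y) $ i\<bar> \<le> maxnorm x + maxnorm y" .
qed

lemma maxnorm_uminus: "maxnorm (- x) = maxnorm x"
  unfolding maxnorm_def by simp

lemma maxnorm_commute: "maxnorm (x - y) = maxnorm (y - x)"
  by (metis maxnorm_uminus minus_diff_eq)

lemma powr_add_le_concave:
  fixes a b c :: real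
  assumes "0 \<le> a" "a \<le> b" "0 \<le> c" "c \<le> 1"
  shows "(a + b) powr c \<le> b powr c + c * a powr c"
proof (cases "a = 0")
  case False
  then have a: "0 < a" and b: "0 < b" using assms by auto
  have "a + b = b * (1 + a / b)"
    using b by (simp add: field_simps)
  then have "(a + b) powr c = b powr c * (1 + a / b) powr c"
    using a b by (simp add: powr_mult)
  also have "(1 + a / b) powr c \<le> 1 + c * (a / b)"
    using Youngs_inequality_0[of c "1 - c" "1 + a / b" 1] a b assms
    by (simp add: algebra_simps add_pos_pos)
  also have "b powr c * (1 + c * (a / b)) = b powr c + c * (a * b powr (c - 1))"
    using b by (simp add: powr_diff field_simps)
  also have "a * b powr (c - 1) \<le> a * a powr (c - 1)"
    using a assms by (intro mult_left_mono powr_mono2') auto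
  also have "a * a powr (c - 1) = a powr c"
    using a by (simp add: powr_diff)
  finally show ?thesis using assms by (simp add: mult_left_mono)
qed simp

lemma powr_add_le_min:
  fixes a b c :: real
  assumes "0 \<le> a" "0 \<le> b" "0 \<le> c" "c \<le> 1"
  shows "(a + b) powr c \<le> a powr c + b powr c - (1 - c) * min a b powr c"
  using powr_add_le_concave[of a b c] powr_add_le_concave[of b a c] assms
  by (cases "a \<le> b") (auto simp: min_def add.commute algebra_simps)

lemma maxnorm_add_powr_le_min:
  "maxnorm (x + y) powr cexp
     \<le> maxnorm x powr cexp + maxnorm y powr cexp - (1 - cexp) * min (maxnorm x) (maxnorm y) powr cexp"
proof -
  have "maxnorm (x + y) powr cexp \<le> (maxnorm x + maxnorm y) powr cexp"
    using cexp_pos by (intro powr_mono2 maxnorm_triangle maxnorm_nonneg) auto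
  also have "\<dots> \<le> maxnorm x powr cexp + maxnorm y powr cexp - (1 - cexp) * min (maxnorm x) (maxnorm y) powr cexp"
    using cexp_pos cexp_le_1 by (intro powr_add_le_min maxnorm_nonneg) auto
  finally show ?thesis .
qed

lemma maxnorm_add_powr_le: "maxnorm (x + y) powr cexp \<le> maxnorm x powr cexp + maxnorm y powr cexp"
proof -
  have "0 \<le> (1 - cexp) * min (maxnorm x) (maxnorm y) powr cexp"
    using cexp_le_1 by simp
  then show ?thesis
    using maxnorm_add_powr_le_min[of x y] by linarith
qed

section \<open>Stretched-exponential sums and \<open>D_N \<ge> 1\<close>\<close>

lemma summable_exp_neg_powr:
  fixes k c :: real
  assumes "0 < k" "0 < c"
  shows "summable (\<lambda>n::nat. exp (- k * real n powr c))"
proof (rule summable_comparison_test_bigo)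
  show "summable (\<lambda>n. norm (1 / real n ^ 2))"
    using inverse_power_summable[of 2, where 'a = real] by (simp add: divide_inverse)
  show "(\<lambda>n. exp (- k * real n powr c)) \<in> O(\<lambda>n. 1 / real n ^ 2)"
    using assms by real_asymp
qed

lemma summable_on_exp_neg_powr_int:
  fixes k c :: real
  assumes "0 < k" "0 < c"
  shows "(\<lambda>j::int. exp (- k * real_of_int \<bar>j\<bar> powr c)) summable_on UNIV"
proof -
  let ?g = "\<lambda>j::int. exp (- k * real_of_int \<bar>j\<bar> powr c)"
  have nat: "(\<lambda>n::nat. exp (- k * real n powr c)) summable_on UNIV"
    using summable_exp_neg_powr[OF assms] by (subst summable_on_UNIV_nonneg_real_iff) auto
  have "?g summable_on range int"
    using nat by (subst summable_on_reindex) (auto simp: o_def)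
  moreover have "?g summable_on range (\<lambda>n. - int n)"
    using nat by (subst summable_on_reindex) (auto simp: o_def inj_on_def)
  ultimately have "?g summable_on (range int \<union> range (\<lambda>n. - int n))"
    by (rule summable_on_union)
  also have "range int \<union> range (\<lambda>n. - int n) = UNIV"
    by (auto simp: image_iff) (metis minus_minus nat_0_le nat_le_0 neg_0_le_iff_le nle_le)
  finally show ?thesis .
qed

lemma summable_on_exp_neg_maxnorm_powr:
  fixes k c :: real
  assumes "0 < k" "0 < c"
  shows "(\<lambda>m::int ^ 'n::finite. exp (- k * maxnorm m powr c)) summable_on UNIV"
proof -
  \<comment> \<open>\<open>maxnorm m powr c\<close> dominates the mean of the \<open>\<bar>m $ i\<bar> powr c\<close>, so the sum is
    dominated by a product of one-dimensional sums.\<close>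
  define k' where "k' = k / CARD('n)"
  have "0 < k'" using assms by (simp add: k'_def)
  let ?g = "\<lambda>j::int. exp (- k' * real_of_int \<bar>j\<bar> powr c)"
  have "(\<lambda>j. norm (?g j)) summable_on UNIV"
    using summable_on_exp_neg_powr_int[OF \<open>0 < k'\<close> assms(2)] by simp
  then have "Infinite_Set_Sum.abs_summable_on (\<lambda>f. \<Prod>i\<in>UNIV. ?g (f (i::'n))) (PiE UNIV (\<lambda>_. UNIV))"
    by (intro abs_summable_on_prod_PiE) (auto simp: abs_summable_equivalent[symmetric])
  then have "(\<lambda>f. \<Prod>i\<in>UNIV. ?g (f (i::'n))) summable_on PiE UNIV (\<lambda>_. UNIV)"
    by (subst (asm) abs_summable_equivalent[symmetric]) (auto intro: abs_summable_summable)
  also have "PiE UNIV (\<lambda>_. UNIV) = range vec_nth"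
    by (auto simp: PiE_UNIV_domain) (metis vec_lambda_inverse UNIV_I rangeI)
  finally have "(\<lambda>m::int ^ 'n. \<Prod>i\<in>UNIV. ?g (m $ i)) summable_on UNIV"
    by (subst (asm) summable_on_reindex) (auto simp: o_def inj_on_def vec_nth_inject)
  then show ?thesis
  proof (rule summable_on_comparison_test)
    fix m :: "int ^ 'n"
    have "- k * maxnorm m powr c = (\<Sum>i::'n\<in>UNIV. - k' * maxnorm m powr c)"
      by (simp add: k'_def)
    also have "\<dots> \<le> (\<Sum>i\<in>UNIV. - k' * real_of_int \<bar>m $ i\<bar> powr c)"
      using \<open>0 < k'\<close> assms
      by (intro sum_mono mult_left_mono_neg powr_mono2 abs_component_le_maxnorm) auto
    finally show "exp (- k * maxnorm m powr c) \<le> (\<Prod>i\<in>UNIV. ?g (m $ i))"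
      by (simp add: exp_sum[symmetric])
  qed simp
qed

lemma exp_min_powr_le_add:
  fixes a b c K :: real
  assumes "0 \<le> a" "0 \<le> b" "0 \<le> c"
  shows "exp (- K * min a b powr c) \<le> exp (- K * a powr c) + exp (- K * b powr c)"
  by (cases "a \<le> b") (auto simp: min_def add_increasing add_increasing2)

lemma D_nu_c_kernel_le:
  fixes n m :: "int ^ 'n::finite"
  assumes "1/4 \<le> \<sigma>"
  shows "exp (\<sigma> * maxnorm n powr cexp) /
           (exp (\<sigma> * maxnorm m powr cexp) * exp (\<sigma> * maxnorm (n - m) powr cexp))
         \<le> exp (- ((1 - cexp) / 4) * maxnorm m powr cexp)
           + exp (- ((1 - cexp) / 4) * maxnorm (n - m) powr cexp)"
proof -
  define gap where "gap = maxnorm n powr cexp - maxnorm m powr cexp - maxnorm (n - m) powr cexp"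
  define \<delta> where "\<delta> = min (maxnorm m) (maxnorm (n - m)) powr cexp"
  have gap_le: "gap \<le> - ((1 - cexp) * \<delta>)"
    using maxnorm_add_powr_le_min[of m "n - m"] by (simp add: gap_def \<delta>_def algebra_simps)
  moreover have "0 \<le> (1 - cexp) * \<delta>"
    using cexp_le_1 by (simp add: \<delta>_def)
  ultimately have "\<sigma> * gap \<le> 1/4 * gap"
    using assms by (intro mult_right_mono_neg) linarith+
  also have "\<dots> \<le> - ((1 - cexp) / 4) * \<delta>"
    using gap_le by linarith
  finally have "\<sigma> * gap \<le> - ((1 - cexp) / 4) * \<delta>" .
  moreover have "exp (\<sigma> * maxnorm n powr cexp) /
           (exp (\<sigma> * maxnorm m powr cexp) * exp (\<sigma> * maxnorm (n - m) powr cexp)) = exp (\<sigma> * gap)"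
    by (simp add: gap_def exp_diff right_diff_distrib)
  ultimately have "exp (\<sigma> * maxnorm n powr cexp) /
           (exp (\<sigma> * maxnorm m powr cexp) * exp (\<sigma> * maxnorm (n - m) powr cexp))
         \<le> exp (- ((1 - cexp) / 4) * \<delta>)"
    by simp
  also have "\<dots> \<le> exp (- ((1 - cexp) / 4) * maxnorm m powr cexp)
           + exp (- ((1 - cexp) / 4) * maxnorm (n - m) powr cexp)"
    unfolding \<delta>_def using cexp_pos by (intro exp_min_powr_le_add maxnorm_nonneg) auto
  finally show ?thesis .
qed

lemma D_nu_c_ge_1: "1 \<le> D_nu_c TYPE('n::finite)"
proof -
  let ?G = "\<lambda>m::int ^ 'n. exp (- ((1 - cexp) / 4) * maxnorm m powr cexp)"
  let ?f = "\<lambda>n \<sigma> (m::int ^ 'n). exp (\<sigma> * maxnorm n powr cexp) /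
              (exp (\<sigma> * maxnorm m powr cexp) * exp (\<sigma> * maxnorm (n - m) powr cexp))"
  \<comment> \<open>\<open>D_nu_c\<close> is a supremum, so bounding it below by one of its terms requires the
    set of terms to be bounded above.\<close>
  define S where "S = {infsum (?f n \<sigma>) UNIV | n \<sigma>. \<sigma> \<ge> 1/4}"
  have G: "?G summable_on UNIV"
    by (rule summable_on_exp_neg_maxnorm_powr) (auto simp: cexp_def)
  have shift: "bij_betw (\<lambda>m. n - m) UNIV (UNIV :: (int ^ 'n) set)" for n
    by (rule bij_betwI[of _ _ _ "\<lambda>m. n - m"]) auto
  have G_shift: "(\<lambda>m. ?G (n - m)) summable_on UNIV" "infsum (\<lambda>m. ?G (n - m)) UNIV = infsum ?G UNIV"
    for n
    using summable_on_reindex_bij_betw[OF shift, of ?G] infsum_reindex_bij_betw[OF shift, of ?G] G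
    by auto
  have f: "?f n \<sigma> summable_on UNIV" "infsum (?f n \<sigma>) UNIV \<le> 2 * infsum ?G UNIV"
    if "1/4 \<le> \<sigma>" for n \<sigma>
  proof -
    have GG: "(\<lambda>m. ?G m + ?G (n - m)) summable_on UNIV"
      by (intro summable_on_add G G_shift)
    show f: "?f n \<sigma> summable_on UNIV"
      by (rule summable_on_comparison_test[OF GG D_nu_c_kernel_le[OF that]]) simp
    have "infsum (?f n \<sigma>) UNIV \<le> infsum (\<lambda>m. ?G m + ?G (n - m)) UNIV"
      by (rule infsum_mono[OF f GG D_nu_c_kernel_le[OF that]])
    also have "\<dots> = 2 * infsum ?G UNIV"
      by (subst infsum_add[OF G G_shift(1)]) (simp only: G_shift(2) mult_2)
    finally show "infsum (?f n \<sigma>) UNIV \<le> 2 * infsum ?G UNIV" .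
  qed
  have "bdd_above S"
    unfolding S_def using f(2) by (auto intro!: bdd_aboveI)
  moreover have "infsum (?f 0 (1/4)) UNIV \<in> S"
    unfolding S_def by blast
  moreover have "1 \<le> infsum (?f 0 (1/4)) UNIV"
  proof -
    have "infsum (?f 0 (1/4)) {0} \<le> infsum (?f 0 (1/4)) UNIV"
      using f(1)[of "1/4" 0] by (intro infsum_mono_neutral) auto
    then show ?thesis
      using cexp_pos by simp
  qed
  ultimately have "1 \<le> Sup S"
    by (intro cSup_upper2)
  then show ?thesis
    by (simp add: D_nu_c_def S_def)
qed

lemma D_N_ge_1: "1 \<le> D_N TYPE('n::finite)"
  using D_nu_c_ge_1[where 'n = 'n] by (simp add: D_N_def)

lemma wt_nonneg [simp]: "0 \<le> wt \<sigma> (x :: int ^ 'n::finite)"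
  using D_N_ge_1[where 'n = 'n] by (simp add: wt_def)

lemma wt_ge_1:
  fixes x :: "int ^ 'n::finite"
  assumes "0 \<le> \<sigma>"
  shows "1 \<le> wt \<sigma> x"
proof -
  have "1 \<le> exp (\<sigma> * maxnorm x powr cexp)"
    using assms by simp
  then show ?thesis
    using D_N_ge_1[where 'n = 'n] mult_mono[of 1 "D_N TYPE('n)" 1] by (simp add: wt_def)
qed

lemma wt_mono: "\<sigma> \<le> \<tau> \<Longrightarrow> wt \<sigma> (x :: int ^ 'n::finite) \<le> wt \<tau> x"
  unfolding wt_def using D_N_ge_1[where 'n = 'n] by (intro mult_left_mono) (auto intro: mult_right_mono)

lemma wt_add_le:
  fixes x y :: "int ^ 'n::finite"
  assumes "0 \<le> \<sigma>" "\<sigma> \<le> \<tau>"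
  shows "wt \<sigma> (x + y) \<le> wt \<tau> x * wt \<sigma> y"
proof -
  let ?D = "D_N TYPE('n)"
  have "\<sigma> * maxnorm (x + y) powr cexp \<le> \<sigma> * maxnorm x powr cexp + \<sigma> * maxnorm y powr cexp"
    using mult_left_mono[OF maxnorm_add_powr_le assms(1)] by (simp add: distrib_left)
  also have "\<dots> \<le> \<tau> * maxnorm x powr cexp + \<sigma> * maxnorm y powr cexp"
    using assms(2) by (simp add: mult_right_mono)
  finally have "wt \<sigma> (x + y) \<le> ?D * (exp (\<tau> * maxnorm x powr cexp) * exp (\<sigma> * maxnorm y powr cexp))"
    using D_N_ge_1[where 'n = 'n] by (simp add: wt_def exp_add[symmetric])
  also have "\<dots> \<le> ?D * ?D * (exp (\<tau> * maxnorm x powr cexp) * exp (\<sigma> * maxnorm y powr cexp))"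
    using D_N_ge_1[where 'n = 'n] by (intro mult_right_mono) auto
  also have "\<dots> = wt \<tau> x * wt \<sigma> y"
    by (simp add: wt_def algebra_simps)
  finally show ?thesis .
qed

lemma wt_le_exp_gain:
  fixes x :: "int ^ 'n::finite"
  assumes "0 \<le> \<mu>" "0 \<le> l" "l \<le> maxnorm x"
  shows "wt \<sigma> x \<le> exp (- \<mu> * l powr cexp) * wt (\<sigma> + \<mu>) x"
proof -
  have "l powr cexp \<le> maxnorm x powr cexp"
    using assms cexp_pos by (intro powr_mono2) auto
  then have "\<sigma> * maxnorm x powr cexp \<le> - \<mu> * l powr cexp + (\<sigma> + \<mu>) * maxnorm x powr cexp"
    using mult_left_mono[OF _ assms(1), of "l powr cexp" "maxnorm x powr cexp"]
    by (simp add: algebra_simps)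
  then show ?thesis
    using D_N_ge_1[where 'n = 'n] by (simp add: wt_def exp_add[symmetric])
qed

section \<open>Matrices indexed by a finite set\<close>

definition matmul_on :: "'a set \<Rightarrow> ('a \<Rightarrow> 'a \<Rightarrow> 'b::semiring_0) \<Rightarrow> ('a \<Rightarrow> 'a \<Rightarrow> 'b) \<Rightarrow> 'a \<Rightarrow> 'a \<Rightarrow> 'b"
  where "matmul_on S X Y m n = (\<Sum>j\<in>S. X m j * Y j n)"

definition idmat :: "'a \<Rightarrow> 'a \<Rightarrow> 'b::zero_neq_one"
  where "idmat m n = (if m = n then 1 else 0)"

definition right_inv_on :: "'a set \<Rightarrow> ('a \<Rightarrow> 'a \<Rightarrow> 'b::semiring_1) \<Rightarrow> ('a \<Rightarrow> 'a \<Rightarrow> 'b) \<Rightarrow> bool"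
  where "right_inv_on S X Y \<longleftrightarrow> (\<forall>m\<in>S. \<forall>n\<in>S. matmul_on S X Y m n = idmat m n)"

lemma is_inv_on_iff: "is_inv_on S X Y \<longleftrightarrow> right_inv_on S X Y \<and> right_inv_on S Y X"
  by (simp add: is_inv_on_def right_inv_on_def matmul_on_def idmat_def)

lemma matmul_on_idmat_left:
  fixes Y :: "'a \<Rightarrow> 'a \<Rightarrow> 'b::semiring_1"
  assumes "finite S" "m \<in> S"
  shows "matmul_on S idmat Y m n = Y m n"
proof -
  have "matmul_on S idmat Y m n = (\<Sum>j\<in>S. if m = j then Y j n else 0)"
    unfolding matmul_on_def idmat_def by (rule sum.cong) auto
  then show ?thesis
    using assms by simp
qed

lemma matmul_on_idmat_right:
  fixes X :: "'a \<Rightarrow> 'a \<Rightarrow> 'b::semiring_1"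
  assumes "finite S" "n \<in> S"
  shows "matmul_on S X idmat m n = X m n"
proof -
  have "matmul_on S X idmat m n = (\<Sum>j\<in>S. if j = n then X m j else 0)"
    unfolding matmul_on_def idmat_def by (rule sum.cong) auto
  then show ?thesis
    using assms by simp
qed

lemma matmul_on_add_right:
  "matmul_on S X (\<lambda>m n. Y m n + Z m n) m n = matmul_on S X Y m n + matmul_on S X Z m n"
  by (simp add: matmul_on_def distrib_left sum.distrib)

lemma matmul_on_add_left:
  "matmul_on S (\<lambda>m n. X m n + Y m n) Z m n = matmul_on S X Z m n + matmul_on S Y Z m n"
  by (simp add: matmul_on_def distrib_right sum.distrib)

lemma matmul_on_assoc:
  "matmul_on S X (matmul_on S Y Z) m n = matmul_on S (matmul_on S X Y) Z m n"
  unfolding matmul_on_def by (simp add: sum_distrib_left sum_distrib_right mult.assoc) (rule sum.swap)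

lemma matmul_on_cong_left:
  "(\<And>j. j \<in> S \<Longrightarrow> X m j = X' m j) \<Longrightarrow> matmul_on S X Y m n = matmul_on S X' Y m n"
  by (simp add: matmul_on_def)

lemma right_inv_on_matmul_on:
  assumes "\<And>m j. m \<in> S \<Longrightarrow> j \<in> S \<Longrightarrow> matmul_on S T A m j = X m j" and "right_inv_on S X M"
  shows "right_inv_on S T (matmul_on S A M)"
  unfolding right_inv_on_def
proof (intro ballI)
  fix m n
  assume mn: "m \<in> S" "n \<in> S"
  have "matmul_on S T (matmul_on S A M) m n = matmul_on S (matmul_on S T A) M m n"
    by (rule matmul_on_assoc)
  also have "\<dots> = matmul_on S X M m n"
    using assms(1)[OF mn(1)] by (rule matmul_on_cong_left)
  also have "\<dots> = idmat m n"
    using assms(2) mn by (simp add: right_inv_on_def)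
  finally show "matmul_on S T (matmul_on S A M) m n = idmat m n" .
qed

lemma norm_matmul_on_le:
  fixes X Y :: "'a \<Rightarrow> 'a \<Rightarrow> 'b::real_normed_algebra"
  shows "norm (matmul_on S X Y m n) \<le> (\<Sum>j\<in>S. norm (X m j) * norm (Y j n))"
  unfolding matmul_on_def by (rule order_trans[OF norm_sum sum_mono[OF norm_mult_ineq]])

definition mat_on :: "(nat \<Rightarrow> 'a) \<Rightarrow> nat \<Rightarrow> ('a \<Rightarrow> 'a \<Rightarrow> 'b) \<Rightarrow> 'b mat"
  where "mat_on e N X = mat N N (\<lambda>(i, j). X (e i) (e j))"

lemma mat_on_carrier [simp]: "mat_on e N X \<in> carrier_mat N N"
  by (simp add: mat_on_def)

lemma mat_on_eq_iff:
  assumes "bij_betw e {0..<N} S"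
  shows "mat_on e N X = mat_on e N Y \<longleftrightarrow> (\<forall>m\<in>S. \<forall>n\<in>S. X m n = Y m n)"
proof
  assume eq: "mat_on e N X = mat_on e N Y"
  show "\<forall>m\<in>S. \<forall>n\<in>S. X m n = Y m n"
  proof (intro ballI)
    fix m n
    assume "m \<in> S" "n \<in> S"
    then obtain i j where "i < N" "j < N" "m = e i" "n = e j"
      using assms by (auto simp: bij_betw_def)
    then show "X m n = Y m n"
      using arg_cong[OF eq, of "\<lambda>A. A $$ (i, j)"] by (simp add: mat_on_def)
  qed
next
  assume "\<forall>m\<in>S. \<forall>n\<in>S. X m n = Y m n"
  then show "mat_on e N X = mat_on e N Y"
    using assms by (intro eq_matI) (auto simp: mat_on_def bij_betw_apply)
qed

lemma mat_on_mult:
  assumes "bij_betw e {0..<N} S"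
  shows "mat_on e N X * mat_on e N Y = mat_on e N (matmul_on S X Y)"
proof (rule eq_matI)
  fix i j
  assume "i < dim_row (mat_on e N (matmul_on S X Y))" "j < dim_col (mat_on e N (matmul_on S X Y))"
  then have ij: "i < N" "j < N"
    by (simp_all add: mat_on_def)
  then have "(mat_on e N X * mat_on e N Y) $$ (i, j) = (\<Sum>k = 0..<N. X (e i) (e k) * Y (e k) (e j))"
    by (simp add: mat_on_def scalar_prod_def)
  also have "\<dots> = matmul_on S X Y (e i) (e j)"
    unfolding matmul_on_def by (rule sum.reindex_bij_betw[OF assms])
  finally show "(mat_on e N X * mat_on e N Y) $$ (i, j) = mat_on e N (matmul_on S X Y) $$ (i, j)"
    using ij by (simp add: mat_on_def)
qed (simp_all add: mat_on_def)

lemma mat_on_idmat: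
  assumes "inj_on e {0..<N}"
  shows "mat_on e N idmat = 1\<^sub>m N"
  using assms by (intro eq_matI) (auto simp: mat_on_def idmat_def inj_on_eq_iff)

lemma right_inv_on_iff_mat_on:
  assumes "bij_betw e {0..<N} S"
  shows "right_inv_on S X Y \<longleftrightarrow> mat_on e N X * mat_on e N Y = 1\<^sub>m N"
  using assms bij_betw_imp_inj_on[OF assms]
  by (simp add: right_inv_on_def mat_on_mult mat_on_idmat[symmetric] mat_on_eq_iff)

lemma right_inv_on_sym:
  fixes X Y :: "'a \<Rightarrow> 'a \<Rightarrow> 'b::field"
  assumes "finite S" and "right_inv_on S X Y"
  shows "right_inv_on S Y X"
proof -
  obtain e where e: "bij_betw e {0..<card S} S"
    using ex_bij_betw_nat_finite[OF assms(1)] by blast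
  show ?thesis
    using assms(2) mat_mult_left_right_inverse[of "mat_on e (card S) X" "card S" "mat_on e (card S) Y"]
    unfolding right_inv_on_iff_mat_on[OF e] by simp
qed

lemma mat_on_inv_into:
  assumes "bij_betw e {0..<N} S" "A \<in> carrier_mat N N"
  shows "mat_on e N (\<lambda>s t. A $$ (inv_into {0..<N} e s, inv_into {0..<N} e t)) = A"
  using assms bij_betw_imp_inj_on[OF assms(1)] by (intro eq_matI) (simp_all add: mat_on_def)

lemma det_mat_on_nonzero:
  fixes X :: "'a \<Rightarrow> 'a \<Rightarrow> 'b::field"
  assumes e: "bij_betw e {0..<N} S"
    and inj: "\<And>v. \<forall>m\<in>S. (\<Sum>j\<in>S. X m j * v j) = 0 \<Longrightarrow> \<forall>j\<in>S. v j = 0"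
  shows "det (mat_on e N X) \<noteq> 0"
proof
  assume "det (mat_on e N X) = 0"
  then obtain v where v: "v \<in> carrier_vec N" "v \<noteq> 0\<^sub>v N" "mat_on e N X *\<^sub>v v = 0\<^sub>v N"
    using det_0_iff_vec_prod_zero_field[OF mat_on_carrier] by blast
  define e' where "e' = inv_into {0..<N} e"
  have e': "e (e' s) = s" "e' s < N" if "s \<in> S" for s
    using that e by (auto simp: e'_def bij_betw_def f_inv_into_f inv_into_into)
  have e'e: "e' (e i) = i" if "i < N" for i
    using that e by (simp add: e'_def bij_betw_def)
  have "(\<Sum>j\<in>S. X m j * v $ e' j) = 0" if "m \<in> S" for m
  proof -
    have "(\<Sum>j\<in>S. X m j * v $ e' j) = (\<Sum>k = 0..<N. X m (e k) * v $ k)"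
      using sum.reindex_bij_betw[OF e, of "\<lambda>j. X m j * v $ e' j"] e'e by simp
    also have "\<dots> = (mat_on e N X *\<^sub>v v) $ e' m"
      using e' that v(1) by (simp add: mat_on_def scalar_prod_def)
    finally show ?thesis
      using v(3) e' that by simp
  qed
  then have v0: "v $ e' j = 0" if "j \<in> S" for j
    using inj[of "\<lambda>j. v $ e' j"] that by simp
  have "v = 0\<^sub>v N"
  proof (rule eq_vecI)
    fix i
    assume "i < dim_vec (0\<^sub>v N)"
    then have i: "i < N"
      by simp
    then have "e i \<in> S"
      using e by (simp add: bij_betw_apply)
    then show "v $ i = 0\<^sub>v N $ i"
      using v0[of "e i"] e'e[OF i] i by simp
  qed (use v(1) in simp)
  with v(2) show False ..
qed

lemma injective_imp_ex_right_inv_on: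
  fixes X :: "'a \<Rightarrow> 'a \<Rightarrow> 'b::field"
  assumes "finite S"
    and inj: "\<And>v. \<forall>m\<in>S. (\<Sum>j\<in>S. X m j * v j) = 0 \<Longrightarrow> \<forall>j\<in>S. v j = 0"
  shows "\<exists>Y. right_inv_on S X Y"
proof -
  obtain e where e: "bij_betw e {0..<card S} S"
    using ex_bij_betw_nat_finite[OF assms(1)] by blast
  let ?XM = "mat_on e (card S) X"
  obtain YM where YM: "YM \<in> carrier_mat (card S) (card S)" "YM * ?XM = 1\<^sub>m (card S)"
    using det_non_zero_imp_unit[OF mat_on_carrier det_mat_on_nonzero[OF e inj], where b = "()"]
    by (auto simp: Units_def ring_mat_def)
  have "?XM * YM = 1\<^sub>m (card S)"
    using mat_mult_left_right_inverse[OF YM(1) mat_on_carrier YM(2)] .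
  then have "right_inv_on S X (\<lambda>s t. YM $$ (inv_into {0..<card S} e s, inv_into {0..<card S} e t))"
    by (simp only: right_inv_on_iff_mat_on[OF e] mat_on_inv_into[OF e YM(1)])
  then show ?thesis
    by blast
qed

definition colsum :: "real \<Rightarrow> (int ^ 'n::finite) set \<Rightarrow> (int ^ 'n \<Rightarrow> int ^ 'n \<Rightarrow> complex) \<Rightarrow> int ^ 'n \<Rightarrow> real"
  where "colsum \<sigma> S A n = (\<Sum>m\<in>S. wt \<sigma> (m - n) * cmod (A m n))"

lemma colsum_nonneg: "0 \<le> colsum \<sigma> S A n"
  unfolding colsum_def by (intro sum_nonneg mult_nonneg_nonneg) auto

lemma colsum_le_mnorm: "finite S \<Longrightarrow> n \<in> S \<Longrightarrow> colsum \<sigma> S A n \<le> mnorm \<sigma> S A"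
  unfolding mnorm_def colsum_def by (auto intro: Max_ge)

lemma mnorm_leI:
  "finite S \<Longrightarrow> S \<noteq> {} \<Longrightarrow> (\<And>n. n \<in> S \<Longrightarrow> colsum \<sigma> S A n \<le> B) \<Longrightarrow> mnorm \<sigma> S A \<le> B"
  unfolding mnorm_def colsum_def by (simp add: Max_le_iff)

lemma mnorm_nonneg:
  assumes "finite S"
  shows "0 \<le> mnorm \<sigma> S A"
proof (cases "S = {}")
  case False
  then obtain n where "n \<in> S"
    by blast
  then show ?thesis
    using colsum_nonneg[of \<sigma> S A n] colsum_le_mnorm[OF assms, of n \<sigma> A] by linarith
qed (simp add: mnorm_def)

lemma mnorm_cong:
  "(\<And>m n. m \<in> S \<Longrightarrow> n \<in> S \<Longrightarrow> X m n = Y m n) \<Longrightarrow> mnorm \<sigma> S X = mnorm \<sigma> S Y"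
  unfolding mnorm_def by (auto intro!: image_cong sum.cong)

lemma mnorm_uminus: "mnorm \<sigma> S (\<lambda>m n. - X m n) = mnorm \<sigma> S X"
  by (simp add: mnorm_def)

lemma mnorm_add_le:
  assumes "finite S"
  shows "mnorm \<sigma> S (\<lambda>m n. X m n + Y m n) \<le> mnorm \<sigma> S X + mnorm \<sigma> S Y"
proof (cases "S = {}")
  case False
  show ?thesis
  proof (rule mnorm_leI[OF assms False])
    fix n
    assume n: "n \<in> S"
    have "colsum \<sigma> S (\<lambda>m n. X m n + Y m n) n \<le> colsum \<sigma> S X n + colsum \<sigma> S Y n"
      unfolding colsum_def sum.distrib[symmetric]
      by (intro sum_mono) (simp add: mult_left_mono norm_triangle_ineq flip: distrib_left)
    also have "\<dots> \<le> mnorm \<sigma> S X + mnorm \<sigma> S Y"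
      by (intro add_mono colsum_le_mnorm[OF assms n])
    finally show "colsum \<sigma> S (\<lambda>m n. X m n + Y m n) n \<le> mnorm \<sigma> S X + mnorm \<sigma> S Y" .
  qed
qed (simp add: mnorm_def)

lemma mnorm_idmat:
  fixes S :: "(int ^ 'n::finite) set"
  assumes "finite S" "S \<noteq> {}"
  shows "mnorm \<sigma> S idmat = wt \<sigma> (0 :: int ^ 'n)"
proof -
  have "colsum \<sigma> S idmat n = wt \<sigma> (0 :: int ^ 'n)" if "n \<in> S" for n :: "int ^ 'n"
    using assms(1) that by (simp add: colsum_def idmat_def if_distrib sum.delta' cong: if_cong)
  then show ?thesis
    using assms by (simp add: mnorm_def colsum_def[symmetric] image_constant_conv cong: image_cong)
qed

lemma mnorm_matmul_le:
  assumes "finite S" "0 \<le> \<sigma>" "\<sigma> \<le> \<tau>"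
  shows "mnorm \<sigma> S (matmul_on S X Y) \<le> mnorm \<tau> S X * mnorm \<sigma> S Y"
proof (cases "S = {}")
  case False
  show ?thesis
  proof (rule mnorm_leI[OF assms(1) False])
    fix n
    assume n: "n \<in> S"
    have entry: "wt \<sigma> (m - n) * cmod (matmul_on S X Y m n)
          \<le> (\<Sum>j\<in>S. wt \<tau> (m - j) * wt \<sigma> (j - n) * (cmod (X m j) * cmod (Y j n)))" for m
    proof -
      have "wt \<sigma> (m - n) * cmod (matmul_on S X Y m n)
            \<le> (\<Sum>j\<in>S. wt \<sigma> (m - n) * (cmod (X m j) * cmod (Y j n)))"
        unfolding sum_distrib_left[symmetric] by (intro mult_left_mono norm_matmul_on_le) simp
      also have "\<dots> \<le> (\<Sum>j\<in>S. wt \<tau> (m - j) * wt \<sigma> (j - n) * (cmod (X m j) * cmod (Y j n)))"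
      proof (intro sum_mono mult_right_mono)
        fix j
        show "wt \<sigma> (m - n) \<le> wt \<tau> (m - j) * wt \<sigma> (j - n)"
          using wt_add_le[OF assms(2,3), of "m - j" "j - n"] by simp
      qed simp
      finally show ?thesis .
    qed
    have "colsum \<sigma> S (matmul_on S X Y) n
          \<le> (\<Sum>m\<in>S. \<Sum>j\<in>S. wt \<tau> (m - j) * wt \<sigma> (j - n) * (cmod (X m j) * cmod (Y j n)))"
      unfolding colsum_def using entry by (rule sum_mono)
    also have "\<dots> = (\<Sum>j\<in>S. colsum \<tau> S X j * (wt \<sigma> (j - n) * cmod (Y j n)))"
      unfolding colsum_def sum_distrib_right by (subst sum.swap) (simp add: algebra_simps)
    also have "\<dots> \<le> (\<Sum>j\<in>S. mnorm \<tau> S X * (wt \<sigma> (j - n) * cmod (Y j n)))"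
      using colsum_le_mnorm[OF assms(1)] by (intro sum_mono mult_right_mono) auto
    also have "\<dots> = mnorm \<tau> S X * colsum \<sigma> S Y n"
      by (simp add: colsum_def sum_distrib_left)
    also have "\<dots> \<le> mnorm \<tau> S X * mnorm \<sigma> S Y"
      using colsum_le_mnorm[OF assms(1) n] mnorm_nonneg[OF assms(1)] by (rule mult_left_mono)
    finally show "colsum \<sigma> S (matmul_on S X Y) n \<le> mnorm \<tau> S X * mnorm \<sigma> S Y" .
  qed
qed (simp add: mnorm_def)

lemma idmat_plus_injective:
  fixes K :: "'a \<Rightarrow> 'a \<Rightarrow> complex"
  assumes "finite S" "q < 1" "\<And>j. j \<in> S \<Longrightarrow> (\<Sum>m\<in>S. cmod (K m j)) \<le> q"
    and "\<forall>m\<in>S. (\<Sum>j\<in>S. (idmat m j + K m j) * v j) = 0"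
  shows "\<forall>j\<in>S. v j = 0"
proof -
  have v: "v m = - (\<Sum>j\<in>S. K m j * v j)" if "m \<in> S" for m
    using assms(4)[rule_format, OF that] matmul_on_idmat_left[OF assms(1) that, of "\<lambda>j _. v j"]
    by (simp add: matmul_on_def distrib_right sum.distrib eq_neg_iff_add_eq_0)
  have v_le: "cmod (v m) \<le> (\<Sum>j\<in>S. cmod (K m j) * cmod (v j))" if "m \<in> S" for m
  proof -
    have "cmod (v m) = cmod (\<Sum>j\<in>S. K m j * v j)"
      using v[OF that] by (metis norm_minus_cancel)
    also have "\<dots> \<le> (\<Sum>j\<in>S. cmod (K m j) * cmod (v j))"
      by (rule order_trans[OF norm_sum]) (simp add: norm_mult)
    finally show ?thesis .
  qed
  define total where "total = (\<Sum>m\<in>S. cmod (v m))"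
  have "total \<le> (\<Sum>m\<in>S. \<Sum>j\<in>S. cmod (K m j) * cmod (v j))"
    unfolding total_def using v_le by (rule sum_mono)
  also have "\<dots> = (\<Sum>j\<in>S. (\<Sum>m\<in>S. cmod (K m j)) * cmod (v j))"
    by (subst sum.swap) (simp add: sum_distrib_right)
  also have "\<dots> \<le> (\<Sum>j\<in>S. q * cmod (v j))"
    by (intro sum_mono mult_right_mono assms(3)) auto
  also have "\<dots> = q * total"
    by (simp add: total_def sum_distrib_left)
  finally have "(1 - q) * total \<le> 0"
    by (simp add: algebra_simps)
  then have "total \<le> 0"
    using assms(2) by (simp add: mult_le_0_iff)
  then show ?thesis
    using assms(1) sum_nonneg_eq_0_iff[of S "\<lambda>m. cmod (v m)"] by (simp add: total_def antisym sum_nonneg)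
qed

lemma ex_right_inv_on_idmat_plus:
  assumes "finite S" "0 \<le> \<sigma>" "mnorm \<sigma> S K < 1"
  shows "\<exists>M. right_inv_on S (\<lambda>m n. idmat m n + K m n) M"
proof -
  have col: "(\<Sum>m\<in>S. cmod (K m j)) \<le> mnorm \<sigma> S K" if "j \<in> S" for j
  proof -
    have "(\<Sum>m\<in>S. cmod (K m j)) \<le> colsum \<sigma> S K j"
      unfolding colsum_def by (intro sum_mono) (simp add: mult_le_cancel_right1 wt_ge_1[OF assms(2)])
    also have "\<dots> \<le> mnorm \<sigma> S K"
      by (rule colsum_le_mnorm[OF assms(1) that])
    finally show ?thesis .
  qed
  have "\<forall>j\<in>S. v j = 0" if "\<forall>m\<in>S. (\<Sum>j\<in>S. (idmat m j + K m j) * v j) = 0" for v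
    by (rule idmat_plus_injective[OF assms(1,3) col that])
  then show ?thesis
    by (rule injective_imp_ex_right_inv_on[OF assms(1)])
qed

lemma mnorm_right_inv_on_idmat_plus_le:
  fixes K :: "int ^ 'n::finite \<Rightarrow> int ^ 'n \<Rightarrow> complex"
  assumes "finite S" "S \<noteq> {}" "0 \<le> \<sigma>" "mnorm \<sigma> S K \<le> 1/2"
    and M: "right_inv_on S (\<lambda>m n. idmat m n + K m n) M"
  shows "mnorm \<sigma> S M \<le> 1 + wt \<sigma> (0 :: int ^ 'n)"
proof -
  \<comment> \<open>Bounding \<open>N = M - 1\<close> through \<open>N = - K - K N\<close>, rather than \<open>M\<close> through \<open>M = 1 - K M\<close>,
    gives the constant \<open>1 + w(0)\<close> instead of \<open>2 w(0)\<close>.\<close>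
  define N where "N m n = M m n - idmat m n" for m n
  have N: "N m n = - (K m n + matmul_on S K N m n)" if "m \<in> S" "n \<in> S" for m n
  proof -
    have "idmat m n = matmul_on S (\<lambda>m n. idmat m n + K m n) M m n"
      using M that by (simp add: right_inv_on_def)
    also have "\<dots> = M m n + matmul_on S K M m n"
      by (simp add: matmul_on_add_left matmul_on_idmat_left[OF assms(1) that(1)])
    also have "matmul_on S K M m n = K m n + matmul_on S K N m n"
      using matmul_on_add_right[of S K idmat N m n] matmul_on_idmat_right[OF assms(1) that(2)]
      by (simp add: N_def)
    finally show ?thesis
      by (simp add: N_def algebra_simps)
  qed
  have "mnorm \<sigma> S N = mnorm \<sigma> S (\<lambda>m n. - (K m n + matmul_on S K N m n))"
    by (rule mnorm_cong) (rule N)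
  also have "\<dots> = mnorm \<sigma> S (\<lambda>m n. K m n + matmul_on S K N m n)"
    by (rule mnorm_uminus)
  also have "\<dots> \<le> mnorm \<sigma> S K + mnorm \<sigma> S (matmul_on S K N)"
    by (rule mnorm_add_le[OF assms(1)])
  also have "\<dots> \<le> 1/2 + 1/2 * mnorm \<sigma> S N"
    using mnorm_matmul_le[OF assms(1,3) order_refl, of K N]
      mult_right_mono[OF assms(4) mnorm_nonneg[OF assms(1)], of \<sigma> N] assms(4)
    by linarith
  finally have "mnorm \<sigma> S N \<le> 1"
    by simp
  have "mnorm \<sigma> S M = mnorm \<sigma> S (\<lambda>m n. idmat m n + N m n)"
    by (rule mnorm_cong) (simp add: N_def)
  also have "\<dots> \<le> wt \<sigma> (0 :: int ^ 'n) + mnorm \<sigma> S N"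
    using mnorm_add_le[OF assms(1), of \<sigma> idmat N] mnorm_idmat[OF assms(1,2), of \<sigma>] by simp
  finally show ?thesis
    using \<open>mnorm \<sigma> S N \<le> 1\<close> by simp
qed

section \<open>Gluing local inverses\<close>

definition glue_columns :: "('a \<Rightarrow> 'a set) \<Rightarrow> ('a \<Rightarrow> 'a \<Rightarrow> 'a \<Rightarrow> 'b::zero) \<Rightarrow> 'a \<Rightarrow> 'a \<Rightarrow> 'b"
  where "glue_columns U G m n = (if m \<in> U n then G n m n else 0)"

definition glue_residual ::
  "('a \<Rightarrow> 'a \<Rightarrow> 'b::semiring_0) \<Rightarrow> ('a \<Rightarrow> 'a set) \<Rightarrow> ('a \<Rightarrow> 'a \<Rightarrow> 'a \<Rightarrow> 'b) \<Rightarrow> 'a \<Rightarrow> 'a \<Rightarrow> 'b"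
  where "glue_residual R U G m n = (if m \<in> U n then 0 else matmul_on (U n) R (G n) m n)"

lemma sum_glue_columns:
  assumes "finite \<Lambda>" "U n \<subseteq> \<Lambda>" "\<And>j. f j 0 = 0"
  shows "(\<Sum>j\<in>\<Lambda>. f j (glue_columns U G j n)) = (\<Sum>j\<in>U n. f j (G n j n))"
  using assms by (intro sum.mono_neutral_cong_right) (auto simp: glue_columns_def)

lemma matmul_on_glue_columns:
  fixes T D R :: "'a \<Rightarrow> 'a \<Rightarrow> 'b::semiring_1"
  assumes "finite \<Lambda>" "\<forall>m\<in>\<Lambda>. \<forall>n\<in>\<Lambda>. T m n = D m n + R m n"
    and "\<forall>m\<in>\<Lambda>. \<forall>n\<in>\<Lambda>. m \<noteq> n \<longrightarrow> D m n = 0"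
    and "U n \<subseteq> \<Lambda>" "n \<in> U n" "right_inv_on (U n) T (G n)" "m \<in> \<Lambda>"
  shows "matmul_on \<Lambda> T (glue_columns U G) m n = idmat m n + glue_residual R U G m n"
proof -
  have restrict: "matmul_on \<Lambda> T (glue_columns U G) m n = matmul_on (U n) T (G n) m n"
    unfolding matmul_on_def using assms(1,4) by (rule sum_glue_columns) simp
  show ?thesis
  proof (cases "m \<in> U n")
    case True
    then show ?thesis
      using restrict assms(5,6)
      by (simp add: right_inv_on_def glue_residual_def)
  next
    case False
    have "matmul_on (U n) T (G n) m n = matmul_on (U n) R (G n) m n"
      unfolding matmul_on_def
    proof (rule sum.cong[OF refl])
      fix j
      assume "j \<in> U n"
      then have "j \<in> \<Lambda>" "m \<noteq> j"
        using assms(4) False by auto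
      then show "T m j * G n j n = R m j * G n j n"
        using assms(2,3,7) by simp
    qed
    then show ?thesis
      using restrict False assms(5)
      by (auto simp: glue_residual_def idmat_def)
  qed
qed

lemma mnorm_glue_columns_le:
  assumes "finite \<Lambda>" "\<Lambda> \<noteq> {}"
    and "\<And>n. n \<in> \<Lambda> \<Longrightarrow> U n \<subseteq> \<Lambda> \<and> n \<in> U n \<and> \<sigma> \<le> \<tau> n \<and> mnorm (\<tau> n) (U n) (G n) \<le> C"
  shows "mnorm \<sigma> \<Lambda> (glue_columns U G) \<le> C"
proof (rule mnorm_leI[OF assms(1,2)])
  fix n
  assume n: "n \<in> \<Lambda>"
  have "colsum \<sigma> \<Lambda> (glue_columns U G) n = colsum \<sigma> (U n) (G n) n"
    unfolding colsum_def using assms(1) assms(3)[OF n] by (intro sum_glue_columns) auto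
  also have "\<dots> \<le> colsum (\<tau> n) (U n) (G n) n"
    unfolding colsum_def using assms(3)[OF n] by (intro sum_mono mult_right_mono wt_mono) auto
  also have "\<dots> \<le> C"
    using assms(1) assms(3)[OF n] colsum_le_mnorm[of "U n" n "\<tau> n" "G n"]
    by (meson finite_subset order_trans)
  finally show "colsum \<sigma> \<Lambda> (glue_columns U G) n \<le> C" .
qed

lemma colsum_glue_residual_le:
  assumes "finite \<Lambda>" "U n \<subseteq> \<Lambda>" "0 \<le> \<sigma>'" "0 \<le> \<mu>" "\<sigma>' + \<mu> \<le> \<sigma>" "0 \<le> l"
    and far: "\<And>m. m \<in> \<Lambda> - U n \<Longrightarrow> l \<le> maxnorm (n - m)"
  shows "colsum \<sigma>' \<Lambda> (glue_residual R U G) n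
           \<le> exp (- \<mu> * l powr cexp) * colsum (\<sigma>' + \<mu>) (U n) (G n) n * mnorm \<sigma> \<Lambda> R"
proof -
  define E where "E = exp (- \<mu> * l powr cexp)"
  have wt_far: "wt \<sigma>' (m - n) \<le> E * (wt \<sigma> (m - j) * wt (\<sigma>' + \<mu>) (j - n))"
    if "m \<in> \<Lambda> - U n" for m j
  proof -
    have "wt \<sigma>' (m - n) \<le> E * wt (\<sigma>' + \<mu>) (m - n)"
      unfolding E_def using assms(4,6) far[OF that] by (intro wt_le_exp_gain) (simp_all add: maxnorm_commute)
    also have "wt (\<sigma>' + \<mu>) (m - n) \<le> wt \<sigma> (m - j) * wt (\<sigma>' + \<mu>) (j - n)"
      using wt_add_le[of "\<sigma>' + \<mu>" \<sigma> "m - j" "j - n"] assms(3-5) by simp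
    finally show ?thesis
      by (simp add: E_def)
  qed
  have entry: "wt \<sigma>' (m - n) * cmod (glue_residual R U G m n)
      \<le> (\<Sum>j\<in>U n. E * (wt \<sigma> (m - j) * wt (\<sigma>' + \<mu>) (j - n)) * (cmod (R m j) * cmod (G n j n)))"
    if "m \<in> \<Lambda>" for m
  proof (cases "m \<in> U n")
    case False
    have "wt \<sigma>' (m - n) * cmod (glue_residual R U G m n)
          \<le> (\<Sum>j\<in>U n. wt \<sigma>' (m - n) * (cmod (R m j) * cmod (G n j n)))"
      unfolding glue_residual_def sum_distrib_left[symmetric] using False
      by (simp add: mult_left_mono norm_matmul_on_le)
    also have "\<dots> \<le> (\<Sum>j\<in>U n. E * (wt \<sigma> (m - j) * wt (\<sigma>' + \<mu>) (j - n)) * (cmod (R m j) * cmod (G n j n)))"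
      using that False by (intro sum_mono mult_right_mono wt_far) auto
    finally show ?thesis .
  qed (simp add: glue_residual_def E_def sum_nonneg)
  have "colsum \<sigma>' \<Lambda> (glue_residual R U G) n
      \<le> (\<Sum>m\<in>\<Lambda>. \<Sum>j\<in>U n. E * (wt \<sigma> (m - j) * wt (\<sigma>' + \<mu>) (j - n)) * (cmod (R m j) * cmod (G n j n)))"
    unfolding colsum_def using entry by (rule sum_mono)
  also have "\<dots> = E * (\<Sum>j\<in>U n. colsum \<sigma> \<Lambda> R j * (wt (\<sigma>' + \<mu>) (j - n) * cmod (G n j n)))"
    unfolding colsum_def by (subst sum.swap) (simp add: sum_distrib_left sum_distrib_right algebra_simps)
  also have "\<dots> \<le> E * (\<Sum>j\<in>U n. mnorm \<sigma> \<Lambda> R * (wt (\<sigma>' + \<mu>) (j - n) * cmod (G n j n)))"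
    using assms(1,2) colsum_le_mnorm[OF assms(1)]
    by (intro mult_left_mono sum_mono mult_right_mono) (auto simp: E_def)
  also have "\<dots> = E * colsum (\<sigma>' + \<mu>) (U n) (G n) n * mnorm \<sigma> \<Lambda> R"
    by (simp add: colsum_def sum_distrib_left sum_distrib_right mult_ac)
  finally show ?thesis
    by (simp add: E_def)
qed

lemma mnorm_glue_residual_le:
  assumes "finite \<Lambda>" "\<Lambda> \<noteq> {}" "0 \<le> \<sigma>'"
    and "\<And>n. n \<in> \<Lambda> \<Longrightarrow> U n \<subseteq> \<Lambda> \<and> n \<in> U n \<and> 0 \<le> \<mu> n \<and> \<sigma>' + \<mu> n \<le> \<sigma> \<and> 0 \<le> l n"
    and "\<And>n m. n \<in> \<Lambda> \<Longrightarrow> m \<in> \<Lambda> - U n \<Longrightarrow> l n \<le> maxnorm (n - m)"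
    and "\<And>n. n \<in> \<Lambda> \<Longrightarrow> mnorm (\<sigma>' + \<mu> n) (U n) (G n) \<le> C n"
    and "\<And>n. n \<in> \<Lambda> \<Longrightarrow> C n * exp (- \<mu> n * l n powr cexp) * mnorm \<sigma> \<Lambda> R \<le> q"
  shows "mnorm \<sigma>' \<Lambda> (glue_residual R U G) \<le> q"
proof (rule mnorm_leI[OF assms(1,2)])
  fix n
  assume n: "n \<in> \<Lambda>"
  let ?E = "exp (- \<mu> n * l n powr cexp)"
  have "colsum \<sigma>' \<Lambda> (glue_residual R U G) n \<le> ?E * colsum (\<sigma>' + \<mu> n) (U n) (G n) n * mnorm \<sigma> \<Lambda> R"
    using assms(1,3) assms(4,5)[OF n] by (intro colsum_glue_residual_le) auto
  also have "colsum (\<sigma>' + \<mu> n) (U n) (G n) n \<le> C n"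
    using assms(1) assms(4,6)[OF n] colsum_le_mnorm[of "U n" n] by (meson finite_subset order_trans)
  also have "?E * C n * mnorm \<sigma> \<Lambda> R \<le> q"
    using assms(7)[OF n] by (simp add: mult_ac)
  finally show "colsum \<sigma>' \<Lambda> (glue_residual R U G) n \<le> q"
    by (simp add: mult_right_mono mnorm_nonneg[OF assms(1)])
qed

theorem lemma15:
  fixes \<Lambda> :: "(int ^ 'n) set"
    and T D R :: "int ^ 'n \<Rightarrow> int ^ 'n \<Rightarrow> complex"
    and \<sigma> \<sigma>' :: real
    and l \<mu> Cn :: "int ^ 'n \<Rightarrow> real"
    and U :: "int ^ 'n \<Rightarrow> (int ^ 'n) set"
  assumes "\<sigma> \<ge> \<sigma>'" and "\<sigma>' \<ge> 1/4"
    and "finite \<Lambda>"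
    and "\<forall>m\<in>\<Lambda>. \<forall>n\<in>\<Lambda>. T m n = D m n + R m n"
    and "\<forall>m\<in>\<Lambda>. \<forall>n\<in>\<Lambda>. m \<noteq> n \<longrightarrow> D m n = 0"
    and "\<forall>n\<in>\<Lambda>. l n > 0 \<and> 0 \<le> \<mu> n \<and> \<mu> n \<le> \<sigma> - \<sigma>' \<and> Cn n > 0"
    and "\<forall>n\<in>\<Lambda>. U n \<subseteq> \<Lambda> \<and> n \<in> U n"
    and "\<forall>n\<in>\<Lambda>. \<exists>B. is_inv_on (U n) T B \<and> mnorm (\<sigma>' + \<mu> n) (U n) B \<le> Cn n"
    and "\<forall>n\<in>\<Lambda>. \<forall>m\<in>\<Lambda> - U n. maxnorm (n - m) \<ge> l n"
    and "\<forall>n\<in>\<Lambda>. Cn n * exp (- \<mu> n * l n powr cexp) * mnorm \<sigma> \<Lambda> R \<le> 1/2"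
  shows "\<exists>B. is_inv_on \<Lambda> T B \<and>
           mnorm \<sigma>' \<Lambda> B \<le> (1 + wt \<sigma>' (0 :: int ^ 'n)) *
             (if \<Lambda> = {} then 0 else Max (Cn ` \<Lambda>))"
proof (cases "\<Lambda> = {}")
  case True
  then show ?thesis
    by (auto simp: is_inv_on_def mnorm_def)
next
  case False
  obtain G where G: "\<And>n. n \<in> \<Lambda> \<Longrightarrow> is_inv_on (U n) T (G n) \<and> mnorm (\<sigma>' + \<mu> n) (U n) (G n) \<le> Cn n"
    using bchoice[OF assms(8)] by blast
  let ?A = "glue_columns U G" and ?K = "glue_residual R U G"
  have "0 \<le> \<sigma>'"
    using assms(2) by simp
  have K: "mnorm \<sigma>' \<Lambda> ?K \<le> 1/2"
    using assms G by (intro mnorm_glue_residual_le[OF assms(3) False, where \<mu> = \<mu> and l = l and C = Cn]) auto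
  then obtain M where M: "right_inv_on \<Lambda> (\<lambda>m n. idmat m n + ?K m n) M"
    using ex_right_inv_on_idmat_plus[OF assms(3) \<open>0 \<le> \<sigma>'\<close>] by force
  have M_le: "mnorm \<sigma>' \<Lambda> M \<le> 1 + wt \<sigma>' (0 :: int ^ 'n)"
    by (rule mnorm_right_inv_on_idmat_plus_le[OF assms(3) False \<open>0 \<le> \<sigma>'\<close> K M])
  have "mnorm (\<sigma>' + \<mu> n) (U n) (G n) \<le> Max (Cn ` \<Lambda>)" if "n \<in> \<Lambda>" for n
    using G[OF that] assms(3) that by (meson Max_ge finite_imageI imageI order_trans)
  then have A: "mnorm \<sigma>' \<Lambda> ?A \<le> Max (Cn ` \<Lambda>)"
    using assms(6,7) by (intro mnorm_glue_columns_le[OF assms(3) False, where \<tau> = "\<lambda>n. \<sigma>' + \<mu> n"]) auto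
  have "matmul_on \<Lambda> T ?A m j = idmat m j + ?K m j" if "m \<in> \<Lambda>" "j \<in> \<Lambda>" for m j
    by (rule matmul_on_glue_columns[OF assms(3-5)]) (use assms(7) G[OF that(2)] that in \<open>auto simp: is_inv_on_iff\<close>)
  then have "right_inv_on \<Lambda> T (matmul_on \<Lambda> ?A M)"
    using M by (rule right_inv_on_matmul_on)
  then have inv: "is_inv_on \<Lambda> T (matmul_on \<Lambda> ?A M)"
    using right_inv_on_sym[OF assms(3)] by (simp add: is_inv_on_iff)
  have "mnorm \<sigma>' \<Lambda> (matmul_on \<Lambda> ?A M) \<le> mnorm \<sigma>' \<Lambda> ?A * mnorm \<sigma>' \<Lambda> M"
    by (rule mnorm_matmul_le[OF assms(3) \<open>0 \<le> \<sigma>'\<close> order_refl])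
  also have "\<dots> \<le> Max (Cn ` \<Lambda>) * (1 + wt \<sigma>' (0 :: int ^ 'n))"
    using A M_le order_trans[OF mnorm_nonneg[OF assms(3)] A] by (intro mult_mono mnorm_nonneg[OF assms(3)])
  finally show ?thesis
    using inv False by (intro exI[of _ "matmul_on \<Lambda> ?A M"]) (simp add: mult.commute)
qed

end
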